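(* Let $\Omega\subset\mathbb R^d$ be a bounded Borel set, $f:\Omega\to[0,\infty)$ bounded with $\int_\Omega f=1$, $p\ge1$, $x_1,x_2\in\Omega$, and $h_1,h_2:[0,1]\to[0,\infty)$ non-decreasing and Lipschitz continuous. Let $(\rho_j)_{j\ge1}$ be a sequence in $(0,1)$ with $\rho_j\to1$ and $\sum_{j\ge1}(1-\rho_j)=+\infty$. For any Borel $\psi_0:\Omega\to[0,1]$ define recursively: $m_j=\int_\Omega(1-\psi_j)f\,dx$, $t_{j+1}=h_2(1-m_j)-h_1(m_j)$, and $$\psi_{j+1}(x)=\begin{cases}\rho_j\,\psi_j(x)&\text{if }\tau(x)<t_{j+1},\\ 1-\rho_j(1-\psi_j(x))&\text{otherwise.}\end{cases}$$ Then $\psi_j\to\bar\psi$ uniformly on every compact subset of $\Omega\setminus\{\tau=\bar t\}$.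
   Context: $\tau(x)=|x-x_1|^p-|x-x_2|^p$, $m(t)=\int_{\{x\in\Omega:\tau(x)<t\}}f\,dx$, $G(t)=h_2(1-m(t))-h_1(m(t))$. There is a unique $\bar t$ with $G(\bar t)=\bar t$, and $\bar\psi(x)=0$ if $\tau(x)<\bar t$, $\bar\psi(x)=1$ if $\tau(x)>\bar t$ (the unique equilibrium). *)

theory Defs
  imports "HOL-Analysis.Analysis"
begin

definition tau :: "real \<Rightarrow> 'a::euclidean_space \<Rightarrow> 'a \<Rightarrow> 'a \<Rightarrow> real" where
  "tau p x1 x2 x = norm (x - x1) powr p - norm (x - x2) powr p"

definition mfun :: "'a::euclidean_space set \<Rightarrow> ('a \<Rightarrow> real) \<Rightarrow> real \<Rightarrow> 'a \<Rightarrow> 'a \<Rightarrow> real \<Rightarrow> real" where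
  "mfun \<Omega> f p x1 x2 t = (LINT x:{x\<in>\<Omega>. tau p x1 x2 x < t}|lebesgue. f x)"

definition Gfun :: "'a::euclidean_space set \<Rightarrow> ('a \<Rightarrow> real) \<Rightarrow> real \<Rightarrow> 'a \<Rightarrow> 'a
    \<Rightarrow> (real \<Rightarrow> real) \<Rightarrow> (real \<Rightarrow> real) \<Rightarrow> real \<Rightarrow> real" where
  "Gfun \<Omega> f p x1 x2 h1 h2 t = h2 (1 - mfun \<Omega> f p x1 x2 t) - h1 (mfun \<Omega> f p x1 x2 t)"

end

theory Submission
  imports Defs
begin

text \<open>
  The masses \<open>m_j = \<integral>(1 - \<psi>_j) f\<close> satisfy \<open>m_(j+1) = \<rho>_j m_j + (1 - \<rho>_j) m(t_(j+1))\<close>.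
  Since the sublevel mass \<open>m(t)\<close> is monotone while \<open>m \<mapsto> h\<^sub>2(1 - m) - h\<^sub>1(m)\<close> is antitone, the new
  term \<open>m(t_(j+1))\<close> lies on the same side of the fixed point \<open>m(tbar)\<close> as \<open>m_j\<close>, so the distance
  to the fixed point contracts by the factor \<open>\<rho>_j\<close> up to an error \<open>1 - \<rho>_j\<close>. As \<open>\<rho>_j \<rightarrow> 1\<close>
  and \<open>\<Sum>(1 - \<rho>_j) = \<infinity>\<close>, the masses converge to \<open>m(tbar)\<close>, hence the thresholds converge to
  \<open>tbar\<close>. On a compact set where \<open>\<tau>\<close> stays away from \<open>tbar\<close>, eventually every point lies on a
  fixed side of all later thresholds, so \<open>\<psi>_j\<close> approaches \<open>0\<close> or \<open>1\<close> uniformly at the rate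
  \<open>\<Prod>\<rho>_i \<le> exp (- \<Sum>(1 - \<rho>_i)) \<rightarrow> 0\<close>.
\<close>

lemma partial_sums_at_top_if_not_summable:
  fixes a :: "nat \<Rightarrow> real"
  assumes nonneg: "\<And>j. 0 \<le> a j" and diverges: "\<not> summable a"
  shows "filterlim (\<lambda>n. \<Sum>i<n. a i) at_top sequentially"
  unfolding filterlim_at_top eventually_sequentially
proof
  fix Z
  obtain N where "Z < (\<Sum>i<N. a i)"
    using summableI_nonneg_bounded[of a Z] nonneg diverges by (meson not_le)
  moreover have "(\<Sum>i<N. a i) \<le> (\<Sum>i<n. a i)" if "N \<le> n" for n
    using that nonneg by (intro sum_mono2) auto
  ultimately show "\<exists>N. \<forall>n\<ge>N. Z \<le> (\<Sum>i<n. a i)"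
    by (meson less_imp_le order_trans)
qed

lemma partial_products_tendsto_zero:
  fixes \<rho> :: "nat \<Rightarrow> real"
  assumes \<rho>: "\<And>j. 0 \<le> \<rho> j" "\<And>j. \<rho> j \<le> 1" and diverges: "\<not> summable (\<lambda>j. 1 - \<rho> j)"
  shows "(\<lambda>n. \<Prod>i<n. \<rho> i) \<longlonglongrightarrow> 0"
proof (rule tendsto_sandwich)
  show "\<forall>\<^sub>F n in sequentially. 0 \<le> (\<Prod>i<n. \<rho> i)"
    using \<rho> by (simp add: prod_nonneg)
  show "\<forall>\<^sub>F n in sequentially. (\<Prod>i<n. \<rho> i) \<le> exp (- (\<Sum>i<n. 1 - \<rho> i))"
  proof (intro always_eventually allI)
    fix n
    have "(\<Prod>i<n. \<rho> i) \<le> (\<Prod>i<n. exp (\<rho> i - 1))"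
      using \<rho> exp_ge_add_one_self by (intro prod_mono) (smt (verit))
    then show "(\<Prod>i<n. \<rho> i) \<le> exp (- (\<Sum>i<n. 1 - \<rho> i))"
      by (simp add: exp_sum[symmetric] sum_negf[symmetric])
  qed
  have "filterlim (\<lambda>n. \<Sum>i<n. 1 - \<rho> i) at_top sequentially"
    using \<rho> diverges by (intro partial_sums_at_top_if_not_summable) auto
  then show "(\<lambda>n. exp (- (\<Sum>i<n. 1 - \<rho> i))) \<longlonglongrightarrow> 0"
    by (intro filterlim_compose[OF exp_at_bot]) (simp add: filterlim_uminus_at_top[symmetric])
qed simp

lemma relaxation_bound_tendsto_zero:
  fixes \<rho> u :: "nat \<Rightarrow> real"
  assumes \<rho>: "\<And>j. 0 \<le> \<rho> j" "\<And>j. \<rho> j \<le> 1" and \<rho>_lim: "\<rho> \<longlonglongrightarrow> 1"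
    and diverges: "\<not> summable (\<lambda>j. 1 - \<rho> j)"
    and u_nonneg: "\<And>j. 0 \<le> u j" and u_Suc: "\<And>j. u (Suc j) \<le> max (\<rho> j * u j) (1 - \<rho> j)"
  shows "u \<longlonglongrightarrow> 0"
proof (rule order_tendstoI)
  fix a :: real assume "a < 0"
  then show "\<forall>\<^sub>F j in sequentially. a < u j"
    using u_nonneg by (intro always_eventually allI) (meson less_le_trans)
next
  fix \<epsilon> :: real assume "0 < \<epsilon>"
  have "\<forall>\<^sub>F j in sequentially. \<rho> j > 1 - \<epsilon>"
    using \<rho>_lim \<open>0 < \<epsilon>\<close> by (intro order_tendstoD(1)) auto
  then obtain N where N: "\<And>j. j \<ge> N \<Longrightarrow> 1 - \<rho> j < \<epsilon>"
    unfolding eventually_sequentially by force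
  \<comment> \<open>While \<open>u \<ge> \<epsilon>\<close>, the maximum is the first entry, so \<open>u\<close> decays like the partial products.\<close>
  have "\<exists>k. u (k + N) < \<epsilon>"
  proof (rule ccontr)
    assume large: "\<nexists>k. u (k + N) < \<epsilon>"
    have decay: "u (k + N) \<le> (\<Prod>i<k. \<rho> (i + N)) * u N" for k
    proof (induction k)
      case (Suc k)
      have "\<epsilon> \<le> u (Suc (k + N))"
        using large not_less by (metis add_Suc)
      then have "u (Suc k + N) \<le> \<rho> (k + N) * u (k + N)"
        using u_Suc[of "k + N"] N[of "k + N"] by (simp add: max_def split: if_splits)
      also have "\<dots> \<le> \<rho> (k + N) * ((\<Prod>i<k. \<rho> (i + N)) * u N)"
        using Suc.IH \<rho> by (intro mult_left_mono) auto
      finally show ?case by (simp add: ac_simps)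
    qed simp
    have "(\<lambda>k. (\<Prod>i<k. \<rho> (i + N)) * u N) \<longlonglongrightarrow> 0 * u N"
      using \<rho> diverges summable_iff_shift[of "\<lambda>j. 1 - \<rho> j" N]
      by (intro tendsto_mult_right partial_products_tendsto_zero) auto
    then have "\<forall>\<^sub>F k in sequentially. (\<Prod>i<k. \<rho> (i + N)) * u N < \<epsilon>"
      using \<open>0 < \<epsilon>\<close> by (intro order_tendstoD(2)) auto
    then obtain k where "(\<Prod>i<k. \<rho> (i + N)) * u N < \<epsilon>"
      using eventually_sequentially by auto
    with decay[of k] large show False by (meson le_less_trans)
  qed
  then obtain M where M: "M \<ge> N" "u M < \<epsilon>" by (meson le_add2)
  have "u (k + M) < \<epsilon>" for k
  proof (induction k)
    case (Suc k)
    have "\<rho> (k + M) * u (k + M) \<le> u (k + M)"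
      using \<rho> u_nonneg by (simp add: mult_left_le_one_le)
    then show ?case using u_Suc[of "k + M"] Suc.IH N[of "k + M"] M(1) by simp
  qed (use M in simp)
  then show "\<forall>\<^sub>F j in sequentially. u j < \<epsilon>"
    using eventually_sequentially_seg[of "\<lambda>j. u j < \<epsilon>" M] by simp
qed

lemma abs_relaxation_step_le:
  fixes r m y c :: real
  assumes r: "0 \<le> r" "r \<le> 1" and y_near: "\<bar>y - c\<bar> \<le> 1"
    and y_below: "c \<le> m \<Longrightarrow> y \<le> c" and y_above: "m \<le> c \<Longrightarrow> c \<le> y"
  shows "\<bar>r * m + (1 - r) * y - c\<bar> \<le> max (r * \<bar>m - c\<bar>) (1 - r)"
proof -
  have split: "r * m + (1 - r) * y - c = r * (m - c) + (1 - r) * (y - c)"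
    by (simp add: algebra_simps)
  have pull: "\<bar>(1 - r) * (y - c)\<bar> \<le> 1 - r"
    using r y_near by (simp add: abs_mult mult_left_le)
  show ?thesis
  proof (cases "c \<le> m")
    case True
    have "(1 - r) * (y - c) \<le> 0"
      using r y_below[OF True] by (simp add: mult_nonneg_nonpos)
    moreover have "r * \<bar>m - c\<bar> = r * (m - c)" "0 \<le> r * (m - c)"
      using r True by auto
    ultimately show ?thesis
      unfolding split using pull by arith
  next
    case False
    have "0 \<le> (1 - r) * (y - c)"
      using r y_above False by simp
    moreover have "r * \<bar>m - c\<bar> = - (r * (m - c))"
      using False by (simp add: algebra_simps)
    moreover have "r * (m - c) \<le> 0"
      using r False by (simp add: mult_nonneg_nonpos)
    ultimately show ?thesis
      unfolding split using pull by arith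
  qed
qed

lemma relaxation_tendsto_fixed_point:
  fixes \<rho> m y :: "nat \<Rightarrow> real" and c :: real
  assumes \<rho>: "\<And>j. 0 \<le> \<rho> j" "\<And>j. \<rho> j \<le> 1" and \<rho>_lim: "\<rho> \<longlonglongrightarrow> 1"
    and diverges: "\<not> summable (\<lambda>j. 1 - \<rho> j)"
    and m_Suc: "\<And>j. m (Suc j) = \<rho> j * m j + (1 - \<rho> j) * y j"
    and y_near: "\<And>j. \<bar>y j - c\<bar> \<le> 1"
    and y_below: "\<And>j. c \<le> m j \<Longrightarrow> y j \<le> c" and y_above: "\<And>j. m j \<le> c \<Longrightarrow> c \<le> y j"
  shows "m \<longlonglongrightarrow> c"
proof -
  have "(\<lambda>j. \<bar>m j - c\<bar>) \<longlonglongrightarrow> 0"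
  proof (rule relaxation_bound_tendsto_zero[OF \<rho> \<rho>_lim diverges])
    fix j
    show "\<bar>m (Suc j) - c\<bar> \<le> max (\<rho> j * \<bar>m j - c\<bar>) (1 - \<rho> j)"
      unfolding m_Suc using \<rho> y_near y_below y_above by (intro abs_relaxation_step_le)
  qed simp
  then show ?thesis
    by (simp add: tendsto_rabs_zero_iff LIM_zero_iff)
qed

lemma uniform_limit_threshold_relaxation:
  fixes T :: "'a::topological_space \<Rightarrow> real" and \<psi> :: "nat \<Rightarrow> 'a \<Rightarrow> real"
    and t \<rho> :: "nat \<Rightarrow> real"
  assumes K: "compact K" and T_cont: "continuous_on K T"
    and off_level: "\<And>x. x \<in> K \<Longrightarrow> T x \<noteq> tbar" and t_lim: "t \<longlonglongrightarrow> tbar"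
    and \<rho>: "\<And>j. 0 \<le> \<rho> j" "\<And>j. \<rho> j \<le> 1" and diverges: "\<not> summable (\<lambda>j. 1 - \<rho> j)"
    and \<psi>_range: "\<And>j x. x \<in> K \<Longrightarrow> 0 \<le> \<psi> j x \<and> \<psi> j x \<le> 1"
    and \<psi>_Suc: "\<And>j x. x \<in> K \<Longrightarrow>
      \<psi> (Suc j) x = (if T x < t j then \<rho> j * \<psi> j x else 1 - \<rho> j * (1 - \<psi> j x))"
  shows "uniform_limit K \<psi> (\<lambda>x. if T x < tbar then 0 else 1) sequentially"
proof -
  define g where "g x = (if T x < tbar then 0 else 1 :: real)" for x
  obtain \<delta> where "\<delta> > 0" and \<delta>: "\<And>x. x \<in> K \<Longrightarrow> \<delta> \<le> \<bar>T x - tbar\<bar>"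
  proof (cases "K = {}")
    case False
    have "continuous_on K (\<lambda>x. \<bar>T x - tbar\<bar>)"
      using T_cont by (intro continuous_intros)
    then obtain x0 where "x0 \<in> K" and "\<And>x. x \<in> K \<Longrightarrow> \<bar>T x0 - tbar\<bar> \<le> \<bar>T x - tbar\<bar>"
      using continuous_attains_inf[OF K False] by blast
    with off_level that[of "\<bar>T x0 - tbar\<bar>"] show thesis by auto
  qed (use that[of 1] in simp)
  obtain M where M: "\<And>j. j \<ge> M \<Longrightarrow> \<bar>t j - tbar\<bar> < \<delta>"
    using LIMSEQ_D[OF t_lim \<open>\<delta> > 0\<close>] by auto
  have step: "\<bar>\<psi> (Suc j) x - g x\<bar> = \<rho> j * \<bar>\<psi> j x - g x\<bar>" if "x \<in> K" "j \<ge> M" for x j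
  proof -
    have "T x < t j \<longleftrightarrow> T x < tbar"
      using M[OF that(2)] \<delta>[OF that(1)] by linarith
    moreover have "1 - \<rho> j * (1 - \<psi> j x) - 1 = \<rho> j * (\<psi> j x - 1)"
      by (simp add: algebra_simps)
    ultimately show ?thesis
      using \<psi>_Suc[OF that(1)] \<rho>[of j] by (auto simp: g_def abs_mult)
  qed
  have decay: "\<bar>\<psi> (k + M) x - g x\<bar> \<le> (\<Prod>i<k. \<rho> (i + M))" if "x \<in> K" for x k
  proof (induction k)
    case 0
    show ?case using \<psi>_range[OF that] by (simp add: g_def)
  next
    case (Suc k)
    have "\<bar>\<psi> (Suc k + M) x - g x\<bar> = \<rho> (k + M) * \<bar>\<psi> (k + M) x - g x\<bar>"
      using step[OF that] by simp
    also have "\<dots> \<le> \<rho> (k + M) * (\<Prod>i<k. \<rho> (i + M))"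
      using Suc.IH \<rho> by (intro mult_left_mono) auto
    finally show ?case by (simp add: mult.commute)
  qed
  have "(\<lambda>k. \<Prod>i<k. \<rho> (i + M)) \<longlonglongrightarrow> 0"
    using \<rho> diverges summable_iff_shift[of "\<lambda>j. 1 - \<rho> j" M]
    by (intro partial_products_tendsto_zero) auto
  show ?thesis
  proof (rule uniform_limitI)
    fix \<epsilon> :: real assume "0 < \<epsilon>"
    then have "\<forall>\<^sub>F k in sequentially. (\<Prod>i<k. \<rho> (i + M)) < \<epsilon>"
      using \<open>(\<lambda>k. \<Prod>i<k. \<rho> (i + M)) \<longlonglongrightarrow> 0\<close> by (intro order_tendstoD(2))
    then have "\<forall>\<^sub>F k in sequentially. \<forall>x\<in>K. dist (\<psi> (k + M) x) (g x) < \<epsilon>"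
      by eventually_elim (use decay in \<open>auto simp: dist_real_def intro: le_less_trans\<close>)
    then show "\<forall>\<^sub>F n in sequentially. \<forall>x\<in>K. dist (\<psi> n x) (if T x < tbar then 0 else 1) < \<epsilon>"
      using eventually_sequentially_seg[of "\<lambda>n. \<forall>x\<in>K. dist (\<psi> n x) (g x) < \<epsilon>" M]
      by (simp add: g_def)
  qed
qed

lemma set_borel_measurable_lebesgue:
  "set_borel_measurable borel S g \<Longrightarrow> set_borel_measurable lebesgue S g"
  unfolding set_borel_measurable_def by (intro measurable_completion) simp

text \<open>
  \<open>t j\<close> is the threshold applied in the step from \<open>\<psi> j\<close> to \<open>\<psi> (Suc j)\<close>, i.e.\ the paper's
  \<open>t_(j+1)\<close>; \<open>sublevel_mass\<close> below is the paper's \<open>m\<close>.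
\<close>

locale threshold_relaxation =
  fixes \<Omega> :: "'a::euclidean_space set" and f T :: "'a \<Rightarrow> real"
    and \<rho> t :: "nat \<Rightarrow> real" and \<psi> :: "nat \<Rightarrow> 'a \<Rightarrow> real"
  assumes \<Omega>_borel [measurable]: "\<Omega> \<in> sets borel"
    and T_borel [measurable]: "T \<in> borel_measurable borel"
    and f_nonneg: "\<And>x. x \<in> \<Omega> \<Longrightarrow> 0 \<le> f x"
    and f_int: "set_integrable lebesgue \<Omega> f"
    and f_one: "(LINT x:\<Omega>|lebesgue. f x) = 1"
    and \<rho>: "\<And>j. 0 \<le> \<rho> j" "\<And>j. \<rho> j \<le> 1"
    and \<psi>0_meas: "set_borel_measurable borel \<Omega> (\<psi> 0)"
    and \<psi>0_range: "\<And>x. x \<in> \<Omega> \<Longrightarrow> 0 \<le> \<psi> 0 x \<and> \<psi> 0 x \<le> 1"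
    and \<psi>_Suc: "\<And>j x. x \<in> \<Omega> \<Longrightarrow>
      \<psi> (Suc j) x = (if T x < t j then \<rho> j * \<psi> j x else 1 - \<rho> j * (1 - \<psi> j x))"
begin

definition mass :: "nat \<Rightarrow> real" where
  "mass j = (LINT x:\<Omega>|lebesgue. (1 - \<psi> j x) * f x)"

definition sublevel_mass :: "real \<Rightarrow> real" where
  "sublevel_mass s = (LINT x:{x\<in>\<Omega>. T x < s}|lebesgue. f x)"

lemma psi_range: "x \<in> \<Omega> \<Longrightarrow> 0 \<le> \<psi> j x \<and> \<psi> j x \<le> 1"
proof (induction j arbitrary: x)
  case (Suc j)
  then have "0 \<le> \<rho> j * \<psi> j x" "\<rho> j * \<psi> j x \<le> 1"
    "0 \<le> \<rho> j * (1 - \<psi> j x)" "\<rho> j * (1 - \<psi> j x) \<le> 1"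
    using \<rho>[of j] by (auto intro: mult_le_one)
  then show ?case using \<psi>_Suc[OF Suc.prems, of j] by auto
qed (use \<psi>0_range in auto)

lemma psi_measurable: "set_borel_measurable borel \<Omega> (\<psi> j)"
proof (induction j)
  case (Suc j)
  have [measurable]: "(\<lambda>x. indicator \<Omega> x * \<psi> j x) \<in> borel_measurable borel"
    using Suc by (simp add: set_borel_measurable_def)
  have "(\<lambda>x. indicator \<Omega> x * \<psi> (Suc j) x) = (\<lambda>x. if T x < t j then \<rho> j * (indicator \<Omega> x * \<psi> j x)
      else indicator \<Omega> x - \<rho> j * (indicator \<Omega> x - indicator \<Omega> x * \<psi> j x))"
    using \<psi>_Suc by (auto simp: indicator_def fun_eq_iff)
  also have "\<dots> \<in> borel_measurable borel"
    by measurable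
  finally show ?case by (simp add: set_borel_measurable_def)
qed (use \<psi>0_meas in simp)

lemma weighted_integrable:
  assumes w_meas: "set_borel_measurable lebesgue \<Omega> w" and w_range: "\<And>x. x \<in> \<Omega> \<Longrightarrow> \<bar>w x\<bar> \<le> 1"
  shows "set_integrable lebesgue \<Omega> (\<lambda>x. w x * f x)"
proof (rule set_integrable_bound[OF f_int])
  have "(\<lambda>x. indicator \<Omega> x * w x * (indicator \<Omega> x * f x)) \<in> borel_measurable lebesgue"
    using w_meas f_int by (auto simp: set_integrable_def set_borel_measurable_def)
  moreover have "(\<lambda>x. indicator \<Omega> x * w x * (indicator \<Omega> x * f x)) = (\<lambda>x. indicator \<Omega> x * (w x * f x))"
    by (auto simp: fun_eq_iff indicator_def)
  ultimately show "set_borel_measurable lebesgue \<Omega> (\<lambda>x. w x * f x)"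
    by (simp add: set_borel_measurable_def)
  show "AE x in lebesgue. x \<in> \<Omega> \<longrightarrow> norm (w x * f x) \<le> norm (f x)"
    using w_range by (auto simp: abs_mult intro!: mult_left_le_one_le)
qed

lemma weighted_mass_bounds:
  assumes w_meas: "set_borel_measurable lebesgue \<Omega> w"
    and w_range: "\<And>x. x \<in> \<Omega> \<Longrightarrow> 0 \<le> w x \<and> w x \<le> 1"
  shows "0 \<le> (LINT x:\<Omega>|lebesgue. w x * f x) \<and> (LINT x:\<Omega>|lebesgue. w x * f x) \<le> 1"
proof
  show "0 \<le> (LINT x:\<Omega>|lebesgue. w x * f x)"
    unfolding set_lebesgue_integral_def using w_range f_nonneg
    by (intro Bochner_Integration.integral_nonneg) (simp add: indicator_def)
  have "set_integrable lebesgue \<Omega> (\<lambda>x. w x * f x)"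
    using w_range by (intro weighted_integrable[OF w_meas]) auto
  then have "(LINT x:\<Omega>|lebesgue. w x * f x) \<le> (LINT x:\<Omega>|lebesgue. f x)"
    using w_range f_nonneg by (intro set_integral_mono[OF _ f_int]) (auto intro!: mult_left_le_one_le)
  then show "(LINT x:\<Omega>|lebesgue. w x * f x) \<le> 1"
    using f_one by simp
qed

lemma sublevel_weight_measurable: "set_borel_measurable lebesgue \<Omega> (indicator {x. T x < s})"
proof (intro set_borel_measurable_lebesgue)
  have "(\<lambda>x. if T x < s then indicator \<Omega> x else 0 :: real) \<in> borel_measurable borel"
    by measurable
  then show "set_borel_measurable borel \<Omega> (indicator {x. T x < s})"
    by (simp add: set_borel_measurable_def indicator_def if_distrib)
qed

lemma sublevel_mass_eq: "sublevel_mass s = (LINT x:\<Omega>|lebesgue. indicator {x. T x < s} x * f x)"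
proof -
  have "{x\<in>\<Omega>. T x < s} = \<Omega> \<inter> {x. T x < s}" by auto
  then show ?thesis
    by (simp add: sublevel_mass_def set_lebesgue_integral_def indicator_inter_arith mult.assoc)
qed

lemma sublevel_mass_bounds: "0 \<le> sublevel_mass s \<and> sublevel_mass s \<le> 1"
  unfolding sublevel_mass_eq by (intro weighted_mass_bounds sublevel_weight_measurable) auto

lemma sublevel_mass_mono: "mono sublevel_mass"
proof
  fix s s' :: real assume "s \<le> s'"
  then show "sublevel_mass s \<le> sublevel_mass s'"
    unfolding sublevel_mass_eq using f_nonneg
    by (intro set_integral_mono weighted_integrable sublevel_weight_measurable)
       (auto simp: indicator_def)
qed

lemma one_minus_psi_measurable: "set_borel_measurable lebesgue \<Omega> (\<lambda>x. 1 - \<psi> j x)"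
proof -
  have "(\<lambda>x. indicator \<Omega> x - indicator \<Omega> x * \<psi> j x) \<in> borel_measurable borel"
    using psi_measurable[of j] by (simp add: set_borel_measurable_def)
  then show ?thesis
    by (intro set_borel_measurable_lebesgue) (simp add: set_borel_measurable_def right_diff_distrib)
qed

lemma mass_bounds: "0 \<le> mass j \<and> mass j \<le> 1"
  unfolding mass_def using psi_range by (intro weighted_mass_bounds one_minus_psi_measurable) auto

lemma mass_Suc: "mass (Suc j) = \<rho> j * mass j + (1 - \<rho> j) * sublevel_mass (t j)"
proof -
  have "mass (Suc j) =
      (LINT x:\<Omega>|lebesgue. \<rho> j * ((1 - \<psi> j x) * f x) + (1 - \<rho> j) * (indicator {x. T x < t j} x * f x))"
    unfolding mass_def using \<psi>_Suc
    by (intro set_lebesgue_integral_cong) (auto simp: algebra_simps indicator_def)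
  also have "\<dots> = \<rho> j * mass j + (1 - \<rho> j) * sublevel_mass (t j)"
    unfolding mass_def sublevel_mass_eq using psi_range
    by (subst set_integral_add)
       (auto intro!: weighted_integrable one_minus_psi_measurable sublevel_weight_measurable)
  finally show ?thesis .
qed

lemma mass_tendsto:
  assumes \<rho>_lim: "\<rho> \<longlonglongrightarrow> 1" and diverges: "\<not> summable (\<lambda>j. 1 - \<rho> j)"
    and t_eq: "\<And>j. t j = H (mass j)" and H_antimono: "antimono_on {0..1} H"
    and fixed_point: "H (sublevel_mass tbar) = tbar"
  shows "mass \<longlonglongrightarrow> sublevel_mass tbar"
proof (rule relaxation_tendsto_fixed_point[OF \<rho> \<rho>_lim diverges mass_Suc])
  fix j
  show "\<bar>sublevel_mass (t j) - sublevel_mass tbar\<bar> \<le> 1"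
    using sublevel_mass_bounds[of "t j"] sublevel_mass_bounds[of tbar] by linarith
next
  fix j assume "sublevel_mass tbar \<le> mass j"
  then have "H (mass j) \<le> H (sublevel_mass tbar)"
    using mass_bounds sublevel_mass_bounds by (intro monotone_onD[OF H_antimono]) auto
  then have "t j \<le> tbar"
    by (simp add: t_eq fixed_point)
  then show "sublevel_mass (t j) \<le> sublevel_mass tbar"
    by (rule monoD[OF sublevel_mass_mono])
next
  fix j assume "mass j \<le> sublevel_mass tbar"
  then have "H (sublevel_mass tbar) \<le> H (mass j)"
    using mass_bounds sublevel_mass_bounds by (intro monotone_onD[OF H_antimono]) auto
  then have "tbar \<le> t j"
    by (simp add: t_eq fixed_point)
  then show "sublevel_mass tbar \<le> sublevel_mass (t j)"
    by (rule monoD[OF sublevel_mass_mono])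
qed

lemma thresholds_tendsto:
  assumes \<rho>_lim: "\<rho> \<longlonglongrightarrow> 1" and diverges: "\<not> summable (\<lambda>j. 1 - \<rho> j)"
    and t_eq: "\<And>j. t j = H (mass j)" and H_antimono: "antimono_on {0..1} H"
    and H_cont: "continuous_on {0..1} H" and fixed_point: "H (sublevel_mass tbar) = tbar"
  shows "t \<longlonglongrightarrow> tbar"
proof -
  have "(\<lambda>j. H (mass j)) \<longlonglongrightarrow> H (sublevel_mass tbar)"
    using mass_tendsto[OF \<rho>_lim diverges t_eq H_antimono fixed_point] mass_bounds sublevel_mass_bounds
    by (intro continuous_on_tendsto_compose[OF H_cont] always_eventually) auto
  moreover have "t = (\<lambda>j. H (mass j))"
    using t_eq by blast
  ultimately show ?thesis
    using fixed_point by simp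
qed

end

lemma continuous_on_tau: "0 < p \<Longrightarrow> continuous_on UNIV (tau p x1 x2)"
  unfolding tau_def[abs_def]
  by (intro continuous_on_diff continuous_on_powr') (auto intro!: continuous_intros)

lemma antimono_on_threshold_map:
  fixes h1 h2 :: "real \<Rightarrow> real"
  assumes "mono_on {0..1} h1" "mono_on {0..1} h2"
  shows "antimono_on {0..1} (\<lambda>m. h2 (1 - m) - h1 m)"
  using assms by (intro monotone_onI diff_mono) (auto elim!: mono_onD)

lemma continuous_on_threshold_map:
  fixes h1 h2 :: "real \<Rightarrow> real"
  assumes "L1-lipschitz_on {0..1} h1" "L2-lipschitz_on {0..1} h2"
  shows "continuous_on {0..1} (\<lambda>m. h2 (1 - m) - h1 m)"
proof (intro continuous_on_diff)
  show "continuous_on {0..1} (\<lambda>m. h2 (1 - m))"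
    by (rule continuous_on_compose2[OF lipschitz_on_continuous_on[OF assms(2)]])
       (auto intro!: continuous_intros)
qed (rule lipschitz_on_continuous_on[OF assms(1)])

text \<open>
  Boundedness of \<open>\<Omega>\<close> and \<open>f\<close>, \<open>x1, x2 \<in> \<Omega>\<close> and the nonnegativity of \<open>h1, h2\<close> are what the
  paper uses to produce the fixed point \<open>tbar\<close>.
\<close>

theorem theorem5p7:
  fixes \<Omega> :: "'a::euclidean_space set" and f :: "'a \<Rightarrow> real"
    and p :: real and x1 x2 :: 'a
    and h1 h2 :: "real \<Rightarrow> real" and L1 L2 :: real
    and \<rho> :: "nat \<Rightarrow> real" and \<psi> :: "nat \<Rightarrow> 'a \<Rightarrow> real" and tbar :: real
  assumes \<Omega>_borel: "\<Omega> \<in> sets borel" and \<Omega>_bdd: "bounded \<Omega>"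
    and f_nonneg: "\<forall>x\<in>\<Omega>. f x \<ge> 0"
    and f_bdd: "\<exists>B. \<forall>x\<in>\<Omega>. f x \<le> B"
    and f_int: "set_integrable lebesgue \<Omega> f"
    and f_one: "(LINT x:\<Omega>|lebesgue. f x) = 1"
    and p: "p \<ge> 1"
    and x1: "x1 \<in> \<Omega>" and x2: "x2 \<in> \<Omega>"
    and h1_nonneg: "\<forall>s\<in>{0..1}. h1 s \<ge> 0" and h2_nonneg: "\<forall>s\<in>{0..1}. h2 s \<ge> 0"
    and h1_mono: "mono_on {0..1} h1" and h2_mono: "mono_on {0..1} h2"
    and h1_lip: "L1-lipschitz_on {0..1} h1" and h2_lip: "L2-lipschitz_on {0..1} h2"
    and \<rho>_range: "\<forall>j. 0 < \<rho> j \<and> \<rho> j < 1"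
    and \<rho>_lim: "\<rho> \<longlonglongrightarrow> 1"
    and \<rho>_div: "\<not> summable (\<lambda>j. 1 - \<rho> j)"
    and \<psi>0_meas: "set_borel_measurable borel \<Omega> (\<psi> 0)"
    and \<psi>0_range: "\<forall>x\<in>\<Omega>. 0 \<le> \<psi> 0 x \<and> \<psi> 0 x \<le> 1"
    and \<psi>_rec: "\<forall>j. \<forall>x\<in>\<Omega>. \<psi> (Suc j) x =
        (let m = (LINT y:\<Omega>|lebesgue. (1 - \<psi> j y) * f y);
             t = h2 (1 - m) - h1 m
         in if tau p x1 x2 x < t then \<rho> j * \<psi> j x else 1 - \<rho> j * (1 - \<psi> j x))"
    and tbar: "Gfun \<Omega> f p x1 x2 h1 h2 tbar = tbar"
  shows "\<forall>K. compact K \<and> K \<subseteq> \<Omega> - {x. tau p x1 x2 x = tbar} \<longrightarrow>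
           uniform_limit K \<psi> (\<lambda>x. if tau p x1 x2 x < tbar then 0 else 1) sequentially"
proof (intro allI impI)
  fix K assume K: "compact K \<and> K \<subseteq> \<Omega> - {x. tau p x1 x2 x = tbar}"
  define H where "H m = h2 (1 - m) - h1 m" for m
  define t where "t j = H (LINT y:\<Omega>|lebesgue. (1 - \<psi> j y) * f y)" for j
  have \<rho>_bounds: "0 \<le> \<rho> j" "\<rho> j \<le> 1" for j
    using \<rho>_range less_imp_le by blast+
  have tau_cont: "continuous_on UNIV (tau p x1 x2)"
    using p by (intro continuous_on_tau) simp
  interpret threshold_relaxation \<Omega> f "tau p x1 x2" \<rho> t \<psi>
    using \<Omega>_borel f_nonneg f_int f_one \<rho>_bounds \<psi>0_meas \<psi>0_range \<psi>_rec
    by unfold_locales (auto simp: borel_measurable_continuous_onI[OF tau_cont] t_def H_def Let_def)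
  have "t \<longlonglongrightarrow> tbar"
  proof (rule thresholds_tendsto[OF \<rho>_lim \<rho>_div])
    show "t j = H (mass j)" for j
      by (simp add: t_def mass_def)
    show "antimono_on {0..1} H"
      unfolding H_def by (rule antimono_on_threshold_map[OF h1_mono h2_mono])
    show "continuous_on {0..1} H"
      unfolding H_def by (rule continuous_on_threshold_map[OF h1_lip h2_lip])
    show "H (sublevel_mass tbar) = tbar"
      using tbar by (simp add: Gfun_def mfun_def H_def sublevel_mass_def)
  qed
  then show "uniform_limit K \<psi> (\<lambda>x. if tau p x1 x2 x < tbar then 0 else 1) sequentially"
    using K \<rho>_bounds \<rho>_div psi_range \<psi>_Suc continuous_on_subset[OF tau_cont]
    by (intro uniform_limit_threshold_relaxation[where t = t and \<rho> = \<rho>]) auto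
qed

end
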